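(* Let $n \ge 4$ and let $FQ_n$, $M_0$, $M_1$, $M_2$ be as defined in the context. Let $M$ be a perfect matching of $FQ_n$ such that $M \subseteq M_0 \cup M_1 \cup M_2$ and $M \neq M_i$ for every $i \in \{0,1,2\}$. Then the graph $FQ_n - M$ (obtained by deleting the edges of $M$, keeping all vertices) is not isomorphic to the hypercube $Q_n$.
   Context: The hypercube $Q_n$ has vertex set $\{0,1\}^n$, with $x=(x_1,\dots,x_n)$ and $y$ adjacent iff they differ in exactly one coordinate. For $x \in \{0,1\}^n$ let $\overline{x}$ denote the complement of $x$, i.e. every coordinate is flipped. The folded hypercube $FQ_n$ is the graph on $\{0,1\}^n$ whose edge set consists of all edges of $Q_n$ together with all edges $\{x,\overline{x}\}$ for $x \in \{0,1\}^n$ (these are called complement edges). Define the following edge sets of $FQ_n$: $M_1$ is the set of pairs $\{x,y\}$ differing exactly in coordinate $n$; $M_2 = \{\{x,\overline{x}\} : x \in \{0,1\}^n\}$; $M_0$ is the set of pairs $\{x,y\}$ differing exactly in coordinate $n-1$. *)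

theory Defs
  imports Main
begin

text \<open>Vertices of Q_n and FQ_n: boolean lists of length n. Coordinate k (1-based, as in
  the paper) is the list index k-1. Edges are represented as two-element sets.\<close>

definition cube_verts :: "nat \<Rightarrow> bool list set" where
  "cube_verts n = {x. length x = n}"

definition differ_exactly :: "nat \<Rightarrow> nat \<Rightarrow> bool list \<Rightarrow> bool list \<Rightarrow> bool" where
  "differ_exactly n i x y \<longleftrightarrow> length x = n \<and> length y = n \<and> i < n \<and> x ! i \<noteq> y ! i
     \<and> (\<forall>j<n. j \<noteq> i \<longrightarrow> x ! j = y ! j)"

definition compl :: "bool list \<Rightarrow> bool list" where
  "compl x = map Not x"

definition dim_edges :: "nat \<Rightarrow> nat \<Rightarrow> bool list set set" where
  "dim_edges n i = {{x, y} | x y. differ_exactly n i x y}"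

definition Q_edges :: "nat \<Rightarrow> bool list set set" where
  "Q_edges n = (\<Union>i<n. dim_edges n i)"

definition compl_edges :: "nat \<Rightarrow> bool list set set" where
  "compl_edges n = {{x, compl x} | x. x \<in> cube_verts n}"

definition FQ_edges :: "nat \<Rightarrow> bool list set set" where
  "FQ_edges n = Q_edges n \<union> compl_edges n"

text \<open>M_1: differ exactly in coordinate n (index n-1); M_0: coordinate n-1 (index n-2);
  M_2: complement edges.\<close>
definition M1 :: "nat \<Rightarrow> bool list set set" where "M1 n = dim_edges n (n - 1)"
definition M0 :: "nat \<Rightarrow> bool list set set" where "M0 n = dim_edges n (n - 2)"
definition M2 :: "nat \<Rightarrow> bool list set set" where "M2 n = compl_edges n"

definition perfect_matching :: "'a set \<Rightarrow> 'a set set \<Rightarrow> 'a set set \<Rightarrow> bool" where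
  "perfect_matching V E M \<longleftrightarrow> M \<subseteq> E \<and> (\<forall>v\<in>V. \<exists>!e. e \<in> M \<and> v \<in> e)"

definition graph_iso :: "'a set \<Rightarrow> 'a set set \<Rightarrow> 'b set \<Rightarrow> 'b set set \<Rightarrow> bool" where
  "graph_iso V1 E1 V2 E2 \<longleftrightarrow> (\<exists>f. bij_betw f V1 V2 \<and>
     (\<forall>x\<in>V1. \<forall>y\<in>V1. {x, y} \<in> E1 \<longleftrightarrow> {f x, f y} \<in> E2))"

end

theory Submission
  imports Defs
begin

text \<open>Write every edge of \<open>FQ\<^sub>n\<close> as \<open>{x, x + D}\<close> (\<open>flip D x\<close> below), where the direction
  \<open>D\<close> is a unit vector or the all-ones vector. In \<open>Q\<^sub>n\<close> every path \<open>u, v, w\<close> with \<open>u \<noteq> w\<close> lies on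
  a 4-cycle, so the same holds in \<open>G = FQ\<^sub>n - M\<close> if \<open>G \<cong> Q\<^sub>n\<close>. For \<open>n \<ge> 4\<close> the sum of two distinct
  directions determines them, so the only common \<open>FQ\<^sub>n\<close>-neighbours of \<open>x\<close> and \<open>x + S + D\<close> are
  \<open>x + S\<close> and \<open>x + D\<close>. Hence if \<open>{x, x + D} \<in> M\<close> and \<open>S \<noteq> D\<close>, then \<open>{x + S, x + S + D} \<in> M\<close> as
  well, for otherwise \<open>x, x + S, x + S + D\<close> would be a path of \<open>G\<close> on no 4-cycle. So \<open>M\<close> is
  invariant under all translations and is the whole parallel class of \<open>D\<close>; when
  \<open>M \<subseteq> M\<^sub>0 \<union> M\<^sub>1 \<union> M\<^sub>2\<close> this class is one of \<open>M\<^sub>0, M\<^sub>1, M\<^sub>2\<close>.\<close>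

definition flip :: "nat set \<Rightarrow> bool list \<Rightarrow> bool list" where
  "flip S x = map (\<lambda>j. x ! j \<noteq> (j \<in> S)) [0..<length x]"

lemma length_flip [simp]: "length (flip S x) = length x"
  by (simp add: flip_def)

lemma nth_flip [simp]: "j < length x \<Longrightarrow> flip S x ! j = (x ! j \<noteq> (j \<in> S))"
  by (simp add: flip_def)

lemma flip_flip: "flip T (flip S x) = flip (sym_diff S T) x"
  by (rule nth_equalityI) auto

lemma flip_flip_same [simp]: "flip S (flip S x) = x"
  by (rule nth_equalityI) auto

lemma flip_empty [simp]: "flip {} x = x"
  by (rule nth_equalityI) auto

lemma flip_eq_flip_iff:
  assumes "S \<subseteq> {..<length x}" and "T \<subseteq> {..<length x}"
  shows "flip S x = flip T x \<longleftrightarrow> S = T"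
proof
  assume "flip S x = flip T x"
  then have "\<forall>j<length x. flip S x ! j = flip T x ! j" by simp
  then show "S = T" using assms by auto
qed simp

lemma eq_flip_differences:
  "length x = length y \<Longrightarrow> y = flip {j. j < length x \<and> x ! j \<noteq> y ! j} x"
  by (rule nth_equalityI) auto

definition FQ_dirs :: "nat \<Rightarrow> nat set set" where
  "FQ_dirs n = insert {..<n} {{k} | k. k < n}"

lemma FQ_dirs_subset: "S \<in> FQ_dirs n \<Longrightarrow> S \<subseteq> {..<n}"
  unfolding FQ_dirs_def by auto

lemma differ_exactly_iff_flip: "differ_exactly n i x y \<longleftrightarrow> length x = n \<and> i < n \<and> y = flip {i} x"
  unfolding differ_exactly_def by (auto intro!: nth_equalityI)

lemma compl_eq_flip: "compl x = flip {..<length x} x"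
  unfolding compl_def by (rule nth_equalityI) auto

lemma doubleton_in_dim_edges_iff:
  "{x, y} \<in> dim_edges n i \<longleftrightarrow> length x = n \<and> i < n \<and> y = flip {i} x"
  unfolding dim_edges_def differ_exactly_iff_flip by (auto simp: doubleton_eq_iff)

lemma doubleton_in_compl_edges_iff:
  "{x, y} \<in> compl_edges n \<longleftrightarrow> length x = n \<and> y = flip {..<n} x"
  unfolding compl_edges_def cube_verts_def compl_eq_flip by (auto simp: doubleton_eq_iff)

lemma doubleton_in_Q_edges_iff: "{x, y} \<in> Q_edges n \<longleftrightarrow> length x = n \<and> (\<exists>k<n. y = flip {k} x)"
  unfolding Q_edges_def using doubleton_in_dim_edges_iff by blast

lemma doubleton_in_FQ_edges_iff:
  "{x, y} \<in> FQ_edges n \<longleftrightarrow> length x = n \<and> (\<exists>S\<in>FQ_dirs n. y = flip S x)"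
  unfolding FQ_edges_def FQ_dirs_def
  using doubleton_in_Q_edges_iff[of x y n] doubleton_in_compl_edges_iff[of x y n] by blast

lemma FQ_edgeE:
  assumes "e \<in> FQ_edges n"
  obtains x S where "e = {x, flip S x}" and "length x = n" and "S \<in> FQ_dirs n"
  using assms unfolding FQ_edges_def Q_edges_def dim_edges_def compl_edges_def FQ_dirs_def
    cube_verts_def differ_exactly_iff_flip compl_eq_flip by blast

definition parallel_class :: "nat \<Rightarrow> nat set \<Rightarrow> bool list set set" where
  "parallel_class n D = {{x, flip D x} | x. length x = n}"

lemma dim_edges_eq_parallel_class: "i < n \<Longrightarrow> dim_edges n i = parallel_class n {i}"
  unfolding dim_edges_def parallel_class_def differ_exactly_iff_flip by blast

lemma compl_edges_eq_parallel_class: "compl_edges n = parallel_class n {..<n}"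
  unfolding compl_edges_def parallel_class_def cube_verts_def compl_eq_flip by auto

lemma parallel_class_edge_at:
  assumes "e \<in> parallel_class n D" and "x \<in> e"
  shows "e = {x, flip D x}"
  using assms unfolding parallel_class_def by auto

lemma FQ_dirs_pair_cases:
  assumes "S \<in> FQ_dirs n" and "T \<in> FQ_dirs n" and "S \<noteq> T"
  obtains a b where "a \<noteq> b" and "{S, T} = {{a}, {b}}" and "sym_diff S T = {a, b}"
  | a where "a < n" and "{S, T} = {{a}, {..<n}}" and "sym_diff S T = {..<n} - {a}"
  using assms unfolding FQ_dirs_def by (auto simp: insert_commute)

lemma sym_diff_FQ_dirs_determines_pair:
  assumes n: "n \<ge> 4" and dirs: "S1 \<in> FQ_dirs n" "S2 \<in> FQ_dirs n" "S3 \<in> FQ_dirs n" "S4 \<in> FQ_dirs n"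
    and "S1 \<noteq> S2" and eq: "sym_diff S1 S2 = sym_diff S3 S4"
  shows "{S1, S2} = {S3, S4}"
proof -
  have "S3 \<noteq> S4" using \<open>S1 \<noteq> S2\<close> eq by blast
  have pair_ne_co_singleton: "{a, b} \<noteq> {..<n} - {c}" if "c < n" for a b c :: nat
  proof
    assume "{a, b} = {..<n} - {c}"
    moreover have "card {a, b} \<le> 2" by (simp add: card_insert_if)
    ultimately show False using that n by simp
  qed
  show ?thesis
  proof (cases rule: FQ_dirs_pair_cases[OF dirs(1,2) \<open>S1 \<noteq> S2\<close>])
    case (1 a b)
    note S12 = this
    show ?thesis
    proof (cases rule: FQ_dirs_pair_cases[OF dirs(3,4) \<open>S3 \<noteq> S4\<close>])
      case (1 c d)
      then have "{a, b} = {c, d}" using S12(3) eq by simp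
      then have "{{a}, {b}} = {{c}, {d}}" by (auto simp: doubleton_eq_iff)
      then show ?thesis using S12(2) 1(2) by simp
    next
      case (2 c)
      then have "{a, b} = {..<n} - {c}" using S12(3) eq by simp
      then show ?thesis using pair_ne_co_singleton[OF \<open>c < n\<close>] by blast
    qed
  next
    case (2 a)
    note S12 = this
    show ?thesis
    proof (cases rule: FQ_dirs_pair_cases[OF dirs(3,4) \<open>S3 \<noteq> S4\<close>])
      case (1 c d)
      then have "{c, d} = {..<n} - {a}" using S12(3) eq by simp
      then show ?thesis using pair_ne_co_singleton[OF \<open>a < n\<close>] by blast
    next
      case (2 c)
      then have "a = c" using S12(1,3) eq by blast
      then show ?thesis using S12(2) 2(2) by simp
    qed
  qed
qed

lemma FQ_common_neighbour:
  assumes n: "n \<ge> 4" and x: "length x = n" and dirs: "S \<in> FQ_dirs n" "D \<in> FQ_dirs n"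
    and "S \<noteq> D" and xw: "{x, w} \<in> FQ_edges n" and wr: "{w, flip D (flip S x)} \<in> FQ_edges n"
  shows "w = flip S x \<or> w = flip D x"
proof -
  obtain S3 where S3: "S3 \<in> FQ_dirs n" "w = flip S3 x"
    using xw doubleton_in_FQ_edges_iff by blast
  obtain S4 where S4: "S4 \<in> FQ_dirs n" "flip D (flip S x) = flip S4 w"
    using wr doubleton_in_FQ_edges_iff by blast
  have "flip (sym_diff S D) x = flip (sym_diff S3 S4) x"
    using S3 S4 by (simp add: flip_flip)
  moreover have "sym_diff S D \<subseteq> {..<length x}" "sym_diff S3 S4 \<subseteq> {..<length x}"
    using FQ_dirs_subset dirs S3(1) S4(1) x by blast+
  ultimately have "sym_diff S D = sym_diff S3 S4"
    by (simp add: flip_eq_flip_iff)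
  then have "{S, D} = {S3, S4}"
    using sym_diff_FQ_dirs_determines_pair[OF n dirs S3(1) S4(1) \<open>S \<noteq> D\<close>] by simp
  then show ?thesis using S3 by (auto simp: doubleton_eq_iff)
qed

definition two_paths_in_squares :: "'a set \<Rightarrow> 'a set set \<Rightarrow> bool" where
  "two_paths_in_squares V E \<longleftrightarrow> (\<forall>u\<in>V. \<forall>v\<in>V. \<forall>w\<in>V. {u, v} \<in> E \<longrightarrow> {v, w} \<in> E \<longrightarrow> u \<noteq> w \<longrightarrow>
     (\<exists>v'\<in>V. v' \<noteq> v \<and> {u, v'} \<in> E \<and> {v', w} \<in> E))"

lemma two_paths_in_squares_Q_edges: "two_paths_in_squares (cube_verts n) (Q_edges n)"
  unfolding two_paths_in_squares_def
proof (intro ballI impI)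
  fix u v w
  assume "{u, v} \<in> Q_edges n" "{v, w} \<in> Q_edges n" "u \<noteq> w"
  then obtain k j where "k < n" "j < n" and v: "v = flip {k} u" and w: "w = flip {j} v"
    and u: "length u = n"
    unfolding doubleton_in_Q_edges_iff by blast
  with \<open>u \<noteq> w\<close> have "k \<noteq> j" by (auto simp: flip_flip)
  define v' where "v' = flip {j} u"
  have "v' \<noteq> v"
    using \<open>k < n\<close> \<open>j < n\<close> \<open>k \<noteq> j\<close> u flip_eq_flip_iff[of "{j}" u "{k}"] unfolding v'_def v by simp
  moreover have "w = flip {k} v'"
    unfolding w v v'_def by (simp add: flip_flip Un_commute)
  then have "{u, v'} \<in> Q_edges n" "{v', w} \<in> Q_edges n"
    using \<open>k < n\<close> \<open>j < n\<close> u unfolding v'_def doubleton_in_Q_edges_iff by auto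
  moreover have "v' \<in> cube_verts n" using u unfolding v'_def cube_verts_def by simp
  ultimately show "\<exists>v'\<in>cube_verts n. v' \<noteq> v \<and> {u, v'} \<in> Q_edges n \<and> {v', w} \<in> Q_edges n"
    by blast
qed

lemma graph_iso_two_paths_in_squares:
  assumes "graph_iso V1 E1 V2 E2" and squares: "two_paths_in_squares V2 E2"
  shows "two_paths_in_squares V1 E1"
proof -
  obtain f where f: "bij_betw f V1 V2"
    and edges: "\<forall>x\<in>V1. \<forall>y\<in>V1. {x, y} \<in> E1 \<longleftrightarrow> {f x, f y} \<in> E2"
    using assms(1) unfolding graph_iso_def by blast
  show ?thesis unfolding two_paths_in_squares_def
  proof (intro ballI impI)
    fix u v w
    assume V: "u \<in> V1" "v \<in> V1" "w \<in> V1" and "{u, v} \<in> E1" "{v, w} \<in> E1" "u \<noteq> w"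
    then have "f u \<noteq> f w" "{f u, f v} \<in> E2" "{f v, f w} \<in> E2"
      using f edges by (auto simp: bij_betw_def inj_on_def)
    moreover have fV: "f ` V1 = V2" using f by (simp add: bij_betw_def)
    ultimately obtain v2 where "v2 \<in> V2" "v2 \<noteq> f v" "{f u, v2} \<in> E2" "{v2, f w} \<in> E2"
      using squares V unfolding two_paths_in_squares_def by blast
    moreover obtain v' where "v' \<in> V1" "v2 = f v'" using \<open>v2 \<in> V2\<close> fV by blast
    ultimately show "\<exists>v'\<in>V1. v' \<noteq> v \<and> {u, v'} \<in> E1 \<and> {v', w} \<in> E1"
      using edges V by (intro bexI[of _ v']) auto
  qed
qed

context
  fixes n :: nat and M :: "bool list set set"
  assumes n: "n \<ge> 4"
    and matching: "perfect_matching (cube_verts n) (FQ_edges n) M"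
    and squares: "two_paths_in_squares (cube_verts n) (FQ_edges n - M)"
begin

lemma matched_partner_unique:
  assumes "{x, y} \<in> M" and "{x, z} \<in> M" and "length x = n"
  shows "z = y"
proof -
  have "\<exists>!e. e \<in> M \<and> x \<in> e"
    using matching assms(3) unfolding perfect_matching_def cube_verts_def by blast
  then have "{x, z} = {x, y}" using assms(1,2) by blast
  then show ?thesis by (auto simp: doubleton_eq_iff)
qed

lemma matching_flip_invariant:
  assumes x: "length x = n" and D: "D \<in> FQ_dirs n" and xD: "{x, flip D x} \<in> M"
    and S: "S \<in> FQ_dirs n"
  shows "{flip S x, flip D (flip S x)} \<in> M"
proof (cases "S = D")
  case True
  then show ?thesis using xD by (simp add: insert_commute)
next
  case False
  show ?thesis
  proof (rule ccontr)
    assume unmatched: "{flip S x, flip D (flip S x)} \<notin> M"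
    define s where "s = flip S x"
    define r where "r = flip D s"
    have sub: "S \<subseteq> {..<length x}" "D \<subseteq> {..<length x}" "sym_diff S D \<subseteq> {..<length x}"
      using FQ_dirs_subset S D x by blast+
    have "s \<noteq> flip D x" using False sub flip_eq_flip_iff unfolding s_def by blast
    then have "{x, s} \<notin> M" using matched_partner_unique[OF xD _ x] by blast
    moreover have "{x, s} \<in> FQ_edges n"
      unfolding doubleton_in_FQ_edges_iff s_def using x S by blast
    ultimately have xs: "{x, s} \<in> FQ_edges n - M" by blast
    have "{s, r} \<in> FQ_edges n"
      unfolding doubleton_in_FQ_edges_iff r_def s_def using x D by auto
    then have sr: "{s, r} \<in> FQ_edges n - M"
      using unmatched unfolding r_def s_def by blast
    have "r = flip (sym_diff S D) x" unfolding r_def s_def by (simp add: flip_flip)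
    then have "x \<noteq> r" using False sub flip_eq_flip_iff[of "{}" x] by fastforce
    moreover have V: "x \<in> cube_verts n" "s \<in> cube_verts n" "r \<in> cube_verts n"
      using x unfolding cube_verts_def s_def r_def by auto
    ultimately obtain w where "w \<noteq> s" "{x, w} \<in> FQ_edges n - M" "{w, r} \<in> FQ_edges n - M"
      using squares xs sr unfolding two_paths_in_squares_def by blast
    moreover have "w = s \<or> w = flip D x"
      using FQ_common_neighbour[OF n x S D False] calculation unfolding s_def r_def by blast
    ultimately show False using xD by auto
  qed
qed

lemma matching_flip_set_invariant:
  assumes "T \<subseteq> {..<n}" and x: "length x = n" and D: "D \<in> FQ_dirs n" and xD: "{x, flip D x} \<in> M"
  shows "{flip T x, flip D (flip T x)} \<in> M"
proof -
  have "finite T" using assms(1) finite_subset by blast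
  then show ?thesis using assms(1)
  proof (induction T rule: finite_induct)
    case (insert k T)
    then have "flip (insert k T) x = flip {k} (flip T x)" by (simp add: flip_flip insert_commute)
    moreover have "{k} \<in> FQ_dirs n" using insert.prems unfolding FQ_dirs_def by blast
    ultimately show ?case
      using matching_flip_invariant[of "flip T x" D "{k}"] insert x D by simp
  qed (use xD in simp)
qed

lemma matching_eq_parallel_class:
  assumes x: "length x = n" and D: "D \<in> FQ_dirs n" and xD: "{x, flip D x} \<in> M"
  shows "M = parallel_class n D"
proof
  have all: "{y, flip D y} \<in> M" if "length y = n" for y
    using eq_flip_differences[of x y] x that
      matching_flip_set_invariant[OF _ x D xD, of "{j. j < n \<and> x ! j \<noteq> y ! j}"] by auto
  then show "parallel_class n D \<subseteq> M" unfolding parallel_class_def by blast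
  show "M \<subseteq> parallel_class n D"
  proof
    fix e assume "e \<in> M"
    then have "e \<in> FQ_edges n" using matching unfolding perfect_matching_def by blast
    then obtain u S where u: "e = {u, flip S u}" "length u = n" by (rule FQ_edgeE)
    then have "flip S u = flip D u"
      using matched_partner_unique[OF all[OF u(2)] _ u(2)] \<open>e \<in> M\<close> by simp
    then show "e \<in> parallel_class n D" unfolding parallel_class_def using u by auto
  qed
qed

end

theorem theorem2:
  fixes n :: nat and M :: "bool list set set"
  assumes "n \<ge> 4"
    and "perfect_matching (cube_verts n) (FQ_edges n) M"
    and "M \<subseteq> M0 n \<union> M1 n \<union> M2 n"
    and "M \<noteq> M0 n" and "M \<noteq> M1 n" and "M \<noteq> M2 n"
  shows "\<not> graph_iso (cube_verts n) (FQ_edges n - M) (cube_verts n) (Q_edges n)"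
proof
  assume "graph_iso (cube_verts n) (FQ_edges n - M) (cube_verts n) (Q_edges n)"
  then have squares: "two_paths_in_squares (cube_verts n) (FQ_edges n - M)"
    using graph_iso_two_paths_in_squares two_paths_in_squares_Q_edges by blast
  define x where "x = replicate n False"
  have x: "length x = n" by (simp add: x_def)
  then obtain e where "e \<in> M" "x \<in> e"
    using assms(2) unfolding perfect_matching_def cube_verts_def by blast
  have classes: "M0 n = parallel_class n {n - 2}" "M1 n = parallel_class n {n - 1}"
      "M2 n = parallel_class n {..<n}"
    using assms(1) by (simp_all add: M0_def M1_def M2_def dim_edges_eq_parallel_class
        compl_edges_eq_parallel_class)
  have dirs: "{n - 2} \<in> FQ_dirs n" "{n - 1} \<in> FQ_dirs n" "{..<n} \<in> FQ_dirs n"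
    using assms(1) unfolding FQ_dirs_def by auto
  obtain D where D: "D \<in> FQ_dirs n" "e \<in> parallel_class n D" "M \<noteq> parallel_class n D"
    using \<open>e \<in> M\<close> assms(3-6) dirs unfolding classes by blast
  have "{x, flip D x} \<in> M"
    using parallel_class_edge_at[OF D(2) \<open>x \<in> e\<close>] \<open>e \<in> M\<close> by simp
  then show False
    using matching_eq_parallel_class[OF assms(1,2) squares x D(1)] D(3) by blast
qed

end
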